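(* Let $A$ be a real $n\times n$ matrix and suppose there is $\kappa_0>0$ with $u^TAu\ge\kappa_0^2|u|^2$ for all $u\in\mathbb R^n$. (i) The map $u\mapsto Au$ is $2$-monotone. (ii) If $A$ is symmetric and $\alpha>0$, then $\widetilde F_{A,\alpha}(u)=|A^{1/2}u|^\alpha Au$ is $(\alpha+2)$-monotone. (iii) Let $F_{A,\alpha}(u)=|u|^\alpha Au$ with $\alpha>0$. If $\alpha=\kappa_0^2/\|A\|_{\mathrm{op}}$, then $F_{A,\alpha}$ is monotone; if $\alpha<\kappa_0^2/\|A\|_{\mathrm{op}}$, then $F_{A,\alpha}$ is $(\alpha+2)$-monotone.
   Context: $|\cdot|$ is the Euclidean norm, $\|A\|_{\mathrm{op}}=\max_{|x|=1}|Ax|$, and for symmetric positive definite $A$, $A^{1/2}$ is its symmetric positive definite square root. A map $F:\mathbb R^n\to\mathbb R^n$ is monotone if $(F(u)-F(v))\cdot(u-v)\ge0$ for all $u,v$; for $\beta>0$ it is $\beta$-monotone if there is $C>0$ with $(F(u)-F(v))\cdot(u-v)\ge C|u-v|^\beta$ for all $u,v$. *)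

theory Defs
  imports "HOL-Analysis.Analysis"
begin

definition monotone_map :: "(real^'n \<Rightarrow> real^'n) \<Rightarrow> bool" where
  "monotone_map F \<longleftrightarrow> (\<forall>u v. (F u - F v) \<bullet> (u - v) \<ge> 0)"

definition beta_monotone :: "real \<Rightarrow> (real^'n \<Rightarrow> real^'n) \<Rightarrow> bool" where
  "beta_monotone \<beta> F \<longleftrightarrow>
     (\<exists>C>0. \<forall>u v. (F u - F v) \<bullet> (u - v) \<ge> C * norm (u - v) powr \<beta>)"

definition sym_pos_def :: "real^'n^'n \<Rightarrow> bool" where
  "sym_pos_def B \<longleftrightarrow> transpose B = B \<and> (\<forall>x. x \<noteq> 0 \<longrightarrow> x \<bullet> (B *v x) > 0)"

definition matrix_sqrt :: "real^'n^'n \<Rightarrow> real^'n^'n" where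
  "matrix_sqrt A = (THE B. sym_pos_def B \<and> B ** B = A)"

definition op_norm :: "real^'n^'m \<Rightarrow> real" where
  "op_norm A = onorm (\<lambda>x. A *v x)"

end

theory Submission
  imports Defs
begin

text \<open>
  Part (i) is the coercivity estimate itself. For (ii), if \<open>S\<close> is the square root of \<open>A\<close>,
  the map is \<open>u \<mapsto> S (G (S u))\<close> with \<open>G x = |x|\<^sup>\<alpha> x\<close>. For \<open>|y| \<le> |x|\<close> one has
  \<open>(G x - G y)\<cdot>(x - y) \<ge> |x|\<^sup>\<alpha> |x - y|\<^sup>2 / 2\<close> and \<open>|x| \<ge> |x - y| / 2\<close>, so \<open>G\<close> is
  \<open>(\<alpha> + 2)\<close>-monotone, and the substitution \<open>x = S u\<close> costs only the factor \<open>\<kappa>0\<close> from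
  \<open>|S h|\<^sup>2 = h\<cdot>A h \<ge> \<kappa>0\<^sup>2 |h|\<^sup>2\<close>. For (iii), again with \<open>|v| \<le> |u|\<close>, split
  \<open>F u - F v = |u|\<^sup>\<alpha> A (u - v) + (|u|\<^sup>\<alpha> - |v|\<^sup>\<alpha>) A v\<close>: coercivity bounds the first term, and the
  concavity estimate \<open>(a\<^sup>\<alpha> - b\<^sup>\<alpha>) b \<le> \<alpha> a\<^sup>\<alpha> (a - b)\<close> (valid as \<open>\<alpha> \<le> \<kappa>0\<^sup>2/\<parallel>A\<parallel> \<le> 1\<close>)
  bounds the second, giving \<open>(F u - F v)\<cdot>(u - v) \<ge> (\<kappa>0\<^sup>2 - \<alpha> \<parallel>A\<parallel>) |u|\<^sup>\<alpha> |u - v|\<^sup>2\<close>.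

  The square root is obtained without spectral theory: for \<open>B = I - d A\<close> with small \<open>d > 0\<close>,
  the iteration \<open>Y \<mapsto> (B + Y\<^sup>2)/2\<close> started at \<open>0\<close> stays among the polynomials in \<open>B\<close> with
  nonnegative coefficients, increases, and converges to some \<open>L\<close> with \<open>(I - L)\<^sup>2 = I - B = d A\<close>.
  Uniqueness follows from a trace argument.
\<close>

section \<open>Matrices and quadratic forms\<close>

lemma inner_matrix_vector_transpose:
  fixes A :: "real^'n^'m"
  shows "(A *v x) \<bullet> y = x \<bullet> (transpose A *v y)"
  using dot_lmul_matrix[of x "transpose A" y] by simp

lemma inner_matrix_vector_sym:
  fixes A :: "real^'n^'n"
  shows "transpose A = A \<Longrightarrow> (A *v x) \<bullet> y = x \<bullet> (A *v y)"
  using inner_matrix_vector_transpose[of A x y] by simp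

lemma norm_matrix_vector_le_op_norm: "norm (A *v x) \<le> op_norm A * norm x"
  unfolding op_norm_def by (rule onorm[OF matrix_vector_mul_bounded_linear])

lemma op_norm_nonneg: "0 \<le> op_norm A"
  unfolding op_norm_def by (rule onorm_pos_le[OF matrix_vector_mul_bounded_linear])

lemma quadratic_form_le_op_norm:
  fixes A :: "real^'n^'n"
  shows "x \<bullet> (A *v x) \<le> op_norm A * (norm x)\<^sup>2"
proof -
  have "x \<bullet> (A *v x) \<le> norm x * norm (A *v x)" by (rule norm_cauchy_schwarz)
  also have "\<dots> \<le> norm x * (op_norm A * norm x)"
    by (intro mult_left_mono norm_matrix_vector_le_op_norm) auto
  finally show ?thesis by (simp add: power2_eq_square mult_ac)
qed

lemma coercivity_le_op_norm:
  fixes A :: "real^'n^'n"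
  assumes "\<forall>u. u \<bullet> (A *v u) \<ge> K * (norm u)\<^sup>2"
  shows "K \<le> op_norm A"
proof -
  define e :: "real^'n" where "e = axis undefined 1"
  have "K * (norm e)\<^sup>2 \<le> op_norm A * (norm e)\<^sup>2"
    using assms quadratic_form_le_op_norm[of e A] by (meson order_trans)
  then show ?thesis unfolding e_def by simp
qed

lemma matrix_entry_inner: "(M :: real^'n^'m) $ i $ j = axis i 1 \<bullet> (M *v axis j 1)"
  by (simp add: matrix_vector_mult_basis inner_axis' column_def)

lemma polarization_sym:
  fixes M :: "real^'n^'n"
  assumes "transpose M = M"
  shows "x \<bullet> (M *v y) = ((x + y) \<bullet> (M *v (x + y)) - (x - y) \<bullet> (M *v (x - y))) / 4"
proof -
  have "y \<bullet> (M *v x) = x \<bullet> (M *v y)"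
    using inner_matrix_vector_sym[OF assms, of x y] by (simp add: inner_commute)
  then show ?thesis
    by (simp add: matrix_vector_right_distrib matrix_vector_mult_diff_distrib inner_add_left
        inner_add_right inner_diff_left inner_diff_right)
qed

lemma transpose_add: "transpose (X + Y) = transpose X + transpose (Y :: real^'n^'m)"
  by (simp add: transpose_def vec_eq_iff)

lemma transpose_diff: "transpose (X - Y) = transpose X - transpose (Y :: real^'n^'m)"
  by (simp add: transpose_def vec_eq_iff)

lemma matrix_diff_ldistrib: "(A :: real^'n^'m) ** (B - C) = A ** B - A ** C"
  by (simp add: matrix_eq matrix_vector_mul_assoc[symmetric] matrix_vector_mult_diff_distrib
      matrix_vector_mult_diff_rdistrib)

lemma matrix_diff_rdistrib: "((A :: real^'n^'m) - B) ** C = A ** C - B ** C"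
  by (simp add: matrix_eq matrix_vector_mul_assoc[symmetric] matrix_vector_mult_diff_rdistrib)

lemma matrix_add_rdistrib: "((A :: real^'n^'m) + B) ** C = A ** C + B ** C"
  by (simp add: matrix_eq matrix_vector_mul_assoc[symmetric] matrix_vector_mult_add_rdistrib)

definition pos_semidef :: "real^'n^'n \<Rightarrow> bool" where
  "pos_semidef X \<longleftrightarrow> (\<forall>x. 0 \<le> x \<bullet> (X *v x))"

lemma pos_semidef_quadratic_form_zero:
  fixes C :: "real^'n^'n"
  assumes sym: "transpose C = C" and psd: "pos_semidef C" and zero: "x \<bullet> (C *v x) = 0"
  shows "C *v x = 0"
proof (rule ccontr)
  define y where "y = C *v x"
  define p q where "p = y \<bullet> y" and "q = y \<bullet> (C *v y)"
  assume "C *v x \<noteq> 0"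
  then have "p > 0" unfolding p_def y_def by simp
  have "q \<ge> 0" using psd unfolding q_def pos_semidef_def by simp
  define t where "t = p / (q + 1)"
  have "t > 0" "t * q < p"
    using \<open>p > 0\<close> \<open>q \<ge> 0\<close> unfolding t_def by (simp_all add: field_simps)
  have xCy: "x \<bullet> (C *v y) = p"
    using inner_matrix_vector_sym[OF sym, of x y] unfolding p_def y_def by (simp add: inner_commute)
  have "0 \<le> (x - t *\<^sub>R y) \<bullet> (C *v (x - t *\<^sub>R y))"
    using psd unfolding pos_semidef_def by simp
  also have "\<dots> = x \<bullet> (C *v x) - t * (x \<bullet> (C *v y)) - t * (y \<bullet> (C *v x)) + t * t * q"
    unfolding q_def
    by (simp add: algebra_simps)
  also have "\<dots> = t * (t * q - 2 * p)"
    unfolding zero xCy by (simp add: p_def y_def algebra_simps)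
  finally show False
    using \<open>t > 0\<close> \<open>t * q < p\<close> \<open>p > 0\<close> by (simp add: zero_le_mult_iff)
qed

lemma sym_pos_def_imp_pos_semidef: "sym_pos_def B \<Longrightarrow> pos_semidef B"
  unfolding sym_pos_def_def pos_semidef_def by (metis inner_zero_left order.refl less_imp_le)

section \<open>Existence of the square root\<close>

inductive_set nonneg_polys :: "real^'n^'n \<Rightarrow> (real^'n^'n) set" for B where
  one: "mat 1 \<in> nonneg_polys B"
| mult: "X \<in> nonneg_polys B \<Longrightarrow> B ** X \<in> nonneg_polys B"
| add: "X \<in> nonneg_polys B \<Longrightarrow> Y \<in> nonneg_polys B \<Longrightarrow> X + Y \<in> nonneg_polys B"
| scaleR: "X \<in> nonneg_polys B \<Longrightarrow> 0 \<le> c \<Longrightarrow> c *\<^sub>R X \<in> nonneg_polys B"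

lemma zero_in_nonneg_polys: "0 \<in> nonneg_polys B"
  using nonneg_polys.scaleR[OF nonneg_polys.one, of 0 B] by simp

lemma base_in_nonneg_polys: "B \<in> nonneg_polys B"
  using nonneg_polys.mult[OF nonneg_polys.one, of B] by simp

lemma nonneg_polys_commute_base: "X \<in> nonneg_polys B \<Longrightarrow> B ** X = X ** B"
proof (induction rule: nonneg_polys.induct)
  case (scaleR X c)
  then show ?case by (simp add: matrix_scalar_ac scalar_matrix_assoc[symmetric])
qed (simp_all add: matrix_mul_assoc matrix_add_ldistrib matrix_add_rdistrib)

lemma nonneg_polys_mult:
  "X \<in> nonneg_polys B \<Longrightarrow> Y \<in> nonneg_polys B \<Longrightarrow> X ** Y \<in> nonneg_polys B"
proof (induction rule: nonneg_polys.induct)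
  case (mult X)
  then show ?case by (simp add: matrix_mul_assoc[symmetric] nonneg_polys.mult)
next
  case (add X Z)
  then show ?case by (simp add: matrix_add_rdistrib nonneg_polys.add)
next
  case (scaleR X c)
  then show ?case by (simp add: scalar_matrix_assoc[symmetric] nonneg_polys.scaleR)
qed simp

lemma nonneg_polys_commute:
  "X \<in> nonneg_polys B \<Longrightarrow> Y \<in> nonneg_polys B \<Longrightarrow> X ** Y = Y ** X"
proof (induction rule: nonneg_polys.induct)
  case (mult X)
  have "B ** X ** Y = B ** (X ** Y)" by (simp add: matrix_mul_assoc)
  also have "\<dots> = (B ** Y) ** X" using mult by (simp add: matrix_mul_assoc)
  also have "\<dots> = Y ** (B ** X)"
    using nonneg_polys_commute_base[OF mult.prems] by (simp add: matrix_mul_assoc)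
  finally show ?case .
next
  case (add X Z)
  then show ?case by (simp add: matrix_add_rdistrib matrix_add_ldistrib)
next
  case (scaleR X c)
  then show ?case by (simp add: matrix_scalar_ac scalar_matrix_assoc[symmetric])
qed simp

lemma nonneg_polys_sym:
  assumes "transpose B = B"
  shows "X \<in> nonneg_polys B \<Longrightarrow> transpose X = X"
proof (induction rule: nonneg_polys.induct)
  case (mult X)
  then show ?case by (simp add: matrix_transpose_mul assms nonneg_polys_commute_base[OF mult.hyps])
qed (simp_all add: transpose_add transpose_scalar)

text \<open>The invariant carries \<open>B X\<close> along, so that \<open>B (B X)\<close> can be handled as \<open>(B x)\<cdot>X(B x)\<close>.\<close>

lemma nonneg_polys_pos_semidef_with_base:
  assumes sym: "transpose B = B" and psd: "pos_semidef B"
  shows "X \<in> nonneg_polys B \<Longrightarrow> pos_semidef X \<and> pos_semidef (B ** X)"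
proof (induction rule: nonneg_polys.induct)
  case one
  then show ?case using psd by (simp add: pos_semidef_def)
next
  case (mult X)
  have "x \<bullet> ((B ** (B ** X)) *v x) = (B *v x) \<bullet> (X *v (B *v x))" for x
    using inner_matrix_vector_sym[OF sym]
    by (simp add: matrix_vector_mul_assoc nonneg_polys_commute_base[OF mult.hyps])
  then show ?case using mult.IH by (simp add: pos_semidef_def)
next
  case (add X Z)
  then show ?case
    by (simp add: pos_semidef_def matrix_add_ldistrib matrix_vector_mult_add_rdistrib
        inner_add_right)
next
  case (scaleR X c)
  then show ?case
    by (simp add: pos_semidef_def matrix_scalar_ac scalar_matrix_assoc[symmetric]
        scaleR_matrix_vector_assoc[symmetric])
qed

lemma nonneg_polys_pos_semidef:
  "transpose B = B \<Longrightarrow> pos_semidef B \<Longrightarrow> X \<in> nonneg_polys B \<Longrightarrow> pos_semidef X"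
  using nonneg_polys_pos_semidef_with_base by blast

primrec sqrt_iter :: "real^'n^'n \<Rightarrow> nat \<Rightarrow> real^'n^'n" where
  "sqrt_iter B 0 = 0"
| "sqrt_iter B (Suc k) = (1/2) *\<^sub>R (B + sqrt_iter B k ** sqrt_iter B k)"

text \<open>\<open>Y\<^sub>k\<^sub>+\<^sub>2 - Y\<^sub>k\<^sub>+\<^sub>1 = (Y\<^sub>k\<^sub>+\<^sub>1 - Y\<^sub>k)(Y\<^sub>k\<^sub>+\<^sub>1 + Y\<^sub>k)/2\<close> because the iterates commute.\<close>

lemma sqrt_iter_in_nonneg_polys:
  "sqrt_iter B k \<in> nonneg_polys B \<and> sqrt_iter B (Suc k) - sqrt_iter B k \<in> nonneg_polys B"
proof (induction k)
  case 0
  have "sqrt_iter B (Suc 0) - sqrt_iter B 0 = (1/2) *\<^sub>R B" by simp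
  then show ?case
    using zero_in_nonneg_polys nonneg_polys.scaleR[OF base_in_nonneg_polys, of "1/2" B] by simp
next
  case (Suc k)
  define P Q where "P = sqrt_iter B (Suc k)" and "Q = sqrt_iter B k"
  have Q: "Q \<in> nonneg_polys B" and PQ: "P - Q \<in> nonneg_polys B"
    using Suc unfolding P_def Q_def by auto
  have P: "P \<in> nonneg_polys B" using nonneg_polys.add[OF PQ Q] by simp
  have "P ** P - Q ** Q = (P - Q) ** (P + Q)"
    unfolding matrix_diff_rdistrib matrix_add_ldistrib nonneg_polys_commute[OF P Q]
    by (simp add: algebra_simps)
  then have "sqrt_iter B (Suc (Suc k)) - sqrt_iter B (Suc k) = (1/2) *\<^sub>R ((P - Q) ** (P + Q))"
    unfolding P_def Q_def by (simp add: algebra_simps)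
  then show ?case
    using P nonneg_polys.scaleR[OF nonneg_polys_mult[OF PQ nonneg_polys.add[OF P Q]], of "1/2"]
    unfolding P_def by simp
qed

lemma norm_sqrt_iter_le:
  assumes "\<forall>x. norm (B *v x) \<le> norm x"
  shows "norm (sqrt_iter B k *v x) \<le> norm x"
proof (induction k arbitrary: x)
  case (Suc k)
  let ?Y = "sqrt_iter B k"
  have "sqrt_iter B (Suc k) *v x = (1/2) *\<^sub>R (B *v x + ?Y *v (?Y *v x))"
    by (simp add: scaleR_matrix_vector_assoc[symmetric] matrix_vector_mult_add_rdistrib
        matrix_vector_mul_assoc)
  then have "norm (sqrt_iter B (Suc k) *v x) \<le> (norm (B *v x) + norm (?Y *v (?Y *v x))) / 2"
    using norm_triangle_ineq[of "B *v x" "?Y *v (?Y *v x)"] by simp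
  also have "\<dots> \<le> (norm x + norm x) / 2"
    using assms Suc[of "?Y *v x"] Suc[of x] by (intro divide_right_mono add_mono) (auto intro: order_trans)
  finally show ?case by simp
qed simp

lemma convergent_quadratic_form_sqrt_iter:
  assumes "transpose B = B" "pos_semidef B" "\<forall>x. norm (B *v x) \<le> norm x"
  shows "convergent (\<lambda>k. x \<bullet> (sqrt_iter B k *v x))"
proof -
  have "incseq (\<lambda>k. x \<bullet> (sqrt_iter B k *v x))"
  proof (rule incseq_SucI)
    fix k
    have "0 \<le> x \<bullet> ((sqrt_iter B (Suc k) - sqrt_iter B k) *v x)"
      using nonneg_polys_pos_semidef[OF assms(1,2) conjunct2[OF sqrt_iter_in_nonneg_polys]]
      by (simp add: pos_semidef_def)
    then show "x \<bullet> (sqrt_iter B k *v x) \<le> x \<bullet> (sqrt_iter B (Suc k) *v x)"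
      by (simp add: matrix_vector_mult_diff_rdistrib inner_diff_right)
  qed
  moreover have "x \<bullet> (sqrt_iter B k *v x) \<le> norm x * norm x" for k
  proof -
    have "x \<bullet> (sqrt_iter B k *v x) \<le> norm x * norm (sqrt_iter B k *v x)"
      by (rule norm_cauchy_schwarz)
    also have "\<dots> \<le> norm x * norm x"
      using norm_sqrt_iter_le[OF assms(3)] by (intro mult_left_mono) auto
    finally show ?thesis .
  qed
  ultimately obtain l where "(\<lambda>k. x \<bullet> (sqrt_iter B k *v x)) \<longlonglongrightarrow> l"
    using incseq_convergent[of "\<lambda>k. x \<bullet> (sqrt_iter B k *v x)"] by blast
  then show ?thesis unfolding convergent_def ..
qed

lemma convergent_entries_of_quadratic_forms:
  fixes M :: "nat \<Rightarrow> real^'n^'n"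
  assumes sym: "\<And>k. transpose (M k) = M k"
    and conv: "\<And>x. convergent (\<lambda>k. x \<bullet> (M k *v x))"
  shows "convergent (\<lambda>k. M k $ i $ j)"
proof -
  let ?x = "axis i 1 :: real^'n" and ?y = "axis j 1 :: real^'n"
  have eq: "M k $ i $ j = ((?x + ?y) \<bullet> (M k *v (?x + ?y)) - (?x - ?y) \<bullet> (M k *v (?x - ?y))) / 4" for k
    using polarization_sym[OF sym, of ?x k ?y] matrix_entry_inner[of "M k" i j] by simp
  obtain l1 l2 where "(\<lambda>k. (?x + ?y) \<bullet> (M k *v (?x + ?y))) \<longlonglongrightarrow> l1"
      "(\<lambda>k. (?x - ?y) \<bullet> (M k *v (?x - ?y))) \<longlonglongrightarrow> l2"
    using conv by (meson convergent_def)
  then have "(\<lambda>k. M k $ i $ j) \<longlonglongrightarrow> (l1 - l2) / 4"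
    unfolding eq by (intro tendsto_intros) auto
  then show ?thesis unfolding convergent_def ..
qed

lemma tendsto_quadratic_form:
  fixes M :: "nat \<Rightarrow> real^'n^'m"
  assumes "\<And>i j. (\<lambda>k. M k $ i $ j) \<longlonglongrightarrow> L $ i $ j"
  shows "(\<lambda>k. x \<bullet> (M k *v y)) \<longlonglongrightarrow> x \<bullet> (L *v y)"
  unfolding inner_vec_def matrix_vector_mult_def inner_real_def
  by (simp, intro tendsto_intros assms)

lemma sqrt_iter_limit:
  assumes sym: "transpose B = B" and psd: "pos_semidef B" and nonexp: "\<forall>x. norm (B *v x) \<le> norm x"
  obtains L where "transpose L = L" "\<And>x. 0 \<le> x \<bullet> (L *v x)" "\<And>x. x \<bullet> (L *v x) \<le> (norm x)\<^sup>2"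
    "L = (1/2) *\<^sub>R (B + L ** L)"
proof
  let ?Y = "sqrt_iter B"
  have sym_Y: "transpose (?Y k) = ?Y k" for k
    using nonneg_polys_sym[OF sym] sqrt_iter_in_nonneg_polys by blast
  define L where "L = (\<chi> i j. lim (\<lambda>k. ?Y k $ i $ j))"
  have entries: "(\<lambda>k. ?Y k $ i $ j) \<longlonglongrightarrow> L $ i $ j" for i j
    using convergent_entries_of_quadratic_forms[OF sym_Y convergent_quadratic_form_sqrt_iter[OF assms]]
    unfolding L_def by (simp add: convergent_LIMSEQ_iff)
  have forms: "(\<lambda>k. x \<bullet> (?Y k *v x)) \<longlonglongrightarrow> x \<bullet> (L *v x)" for x
    by (rule tendsto_quadratic_form[OF entries])
  have "L $ i $ j = L $ j $ i" for i j
  proof -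
    have "?Y k $ i $ j = ?Y k $ j $ i" for k
      using sym_Y[of k] by (simp add: transpose_def vec_eq_iff)
    then have "(\<lambda>k. ?Y k $ j $ i) \<longlonglongrightarrow> L $ i $ j" using entries[of i j] by simp
    then show ?thesis using entries[of j i] LIMSEQ_unique by blast
  qed
  then show "transpose L = L" by (simp add: transpose_def vec_eq_iff)
  show "0 \<le> x \<bullet> (L *v x)" for x
    using nonneg_polys_pos_semidef[OF sym psd conjunct1[OF sqrt_iter_in_nonneg_polys]]
    by (intro LIMSEQ_le_const[OF forms]) (auto simp: pos_semidef_def)
  show "x \<bullet> (L *v x) \<le> (norm x)\<^sup>2" for x
  proof (rule LIMSEQ_le_const2[OF forms], intro exI allI impI)
    fix k
    have "x \<bullet> (?Y k *v x) \<le> norm x * norm (?Y k *v x)" by (rule norm_cauchy_schwarz)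
    also have "\<dots> \<le> norm x * norm x" using norm_sqrt_iter_le[OF nonexp] by (intro mult_left_mono) auto
    finally show "x \<bullet> (?Y k *v x) \<le> (norm x)\<^sup>2" by (simp add: power2_eq_square)
  qed
  have "L $ i $ j = (1/2) * (B $ i $ j + (\<Sum>l\<in>UNIV. L $ i $ l * L $ l $ j))" for i j
  proof (rule LIMSEQ_unique)
    show "(\<lambda>k. ?Y (Suc k) $ i $ j) \<longlonglongrightarrow> L $ i $ j"
      using entries[of i j] by (rule LIMSEQ_Suc)
    have "?Y (Suc k) $ i $ j = (1/2) * (B $ i $ j + (\<Sum>l\<in>UNIV. ?Y k $ i $ l * ?Y k $ l $ j))" for k
      by (simp add: matrix_matrix_mult_def)
    moreover have "(\<lambda>k. (1/2) * (B $ i $ j + (\<Sum>l\<in>UNIV. ?Y k $ i $ l * ?Y k $ l $ j)))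
        \<longlonglongrightarrow> (1/2) * (B $ i $ j + (\<Sum>l\<in>UNIV. L $ i $ l * L $ l $ j))"
      by (intro tendsto_intros entries)
    ultimately show "(\<lambda>k. ?Y (Suc k) $ i $ j) \<longlonglongrightarrow> (1/2) * (B $ i $ j + (\<Sum>l\<in>UNIV. L $ i $ l * L $ l $ j))"
      by simp
  qed
  then show "L = (1/2) *\<^sub>R (B + L ** L)"
    by (simp add: vec_eq_iff matrix_matrix_mult_def)
qed

lemma pos_semidef_sqrt_of_nonexpansive:
  assumes "transpose B = B" "pos_semidef B" "\<forall>x. norm (B *v x) \<le> norm x"
  obtains S where "transpose S = S" "pos_semidef S" "S ** S = mat 1 - B"
proof -
  obtain L where sym: "transpose L = L" and lower: "\<And>x. 0 \<le> x \<bullet> (L *v x)"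
    and upper: "\<And>x. x \<bullet> (L *v x) \<le> (norm x)\<^sup>2" and fix_L: "L = (1/2) *\<^sub>R (B + L ** L)"
    using sqrt_iter_limit[OF assms] by blast
  have "L ** L = 2 *\<^sub>R L - B"
    using arg_cong[OF fix_L, of "\<lambda>X. 2 *\<^sub>R X"] by (simp add: algebra_simps)
  then have "(mat 1 - L) ** (mat 1 - L) = mat 1 - B"
    by (simp add: matrix_diff_ldistrib matrix_diff_rdistrib scaleR_2 algebra_simps)
  moreover have "pos_semidef (mat 1 - L)"
    using upper by (simp add: pos_semidef_def matrix_vector_mult_diff_rdistrib inner_diff_right
        power2_norm_eq_inner)
  moreover have "transpose (mat 1 - L) = mat 1 - L" by (simp add: transpose_diff sym)
  ultimately show ?thesis using that by blast
qed

text \<open>With \<open>d = K / \<parallel>A\<parallel>\<^sup>2\<close>, \<open>|(I - d A) x|\<^sup>2 = |x|\<^sup>2 - 2 d x\<cdot>A x + d\<^sup>2 |A x|\<^sup>2 \<le> |x|\<^sup>2 - d K |x|\<^sup>2\<close>.\<close>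

lemma nonexpansive_shift:
  fixes A :: "real^'n^'n"
  assumes coer: "\<forall>u. u \<bullet> (A *v u) \<ge> K * (norm u)\<^sup>2" and K: "K > 0"
  defines "d \<equiv> K / (op_norm A)\<^sup>2"
  shows "pos_semidef (mat 1 - d *\<^sub>R A)" "norm ((mat 1 - d *\<^sub>R A) *v x) \<le> norm x"
proof -
  define M where "M = op_norm A"
  have "K \<le> M" unfolding M_def by (rule coercivity_le_op_norm[OF coer])
  then have "M > 0" using K by simp
  have "d > 0" "d * M \<le> 1" "d * M\<^sup>2 = K"
    using K \<open>K \<le> M\<close> \<open>M > 0\<close> unfolding d_def M_def[symmetric] by (simp_all add: field_simps power2_eq_square)
  have Bx: "(mat 1 - d *\<^sub>R A) *v y = y - d *\<^sub>R (A *v y)" for y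
    by (simp add: matrix_vector_mult_diff_rdistrib scaleR_matrix_vector_assoc[symmetric])
  show "pos_semidef (mat 1 - d *\<^sub>R A)" unfolding pos_semidef_def
  proof
    fix y :: "real^'n"
    have "d * (y \<bullet> (A *v y)) \<le> d * (M * (norm y)\<^sup>2)"
      using quadratic_form_le_op_norm[of y A] \<open>d > 0\<close> unfolding M_def by simp
    also have "\<dots> \<le> (norm y)\<^sup>2" using \<open>d * M \<le> 1\<close> mult_right_mono[of "d * M" 1 "(norm y)\<^sup>2"] by simp
    finally show "0 \<le> y \<bullet> ((mat 1 - d *\<^sub>R A) *v y)"
      unfolding Bx by (simp add: inner_diff_right power2_norm_eq_inner)
  qed
  have "(norm (A *v x))\<^sup>2 \<le> (M * norm x)\<^sup>2"
    unfolding M_def by (intro power_mono norm_matrix_vector_le_op_norm) auto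
  then have "d\<^sup>2 * (norm (A *v x))\<^sup>2 \<le> d\<^sup>2 * (M * norm x)\<^sup>2"
    by (rule mult_left_mono) simp
  also have "\<dots> = d * K * (norm x)\<^sup>2"
    unfolding \<open>d * M\<^sup>2 = K\<close>[symmetric] by (simp add: power2_eq_square mult_ac)
  finally have "d\<^sup>2 * (norm (A *v x))\<^sup>2 \<le> d * K * (norm x)\<^sup>2" .
  moreover have "d * K * (norm x)\<^sup>2 \<le> d * (x \<bullet> (A *v x))"
    using coer \<open>d > 0\<close> by (simp add: mult.assoc)
  moreover have "0 \<le> d * K * (norm x)\<^sup>2" using \<open>d > 0\<close> K by simp
  moreover have "(norm ((mat 1 - d *\<^sub>R A) *v x))\<^sup>2
      = (norm x)\<^sup>2 - 2 * (d * (x \<bullet> (A *v x))) + d\<^sup>2 * (norm (A *v x))\<^sup>2"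
    unfolding Bx power2_norm_eq_inner
    by (simp add: inner_commute power2_eq_square algebra_simps)
  ultimately have "(norm ((mat 1 - d *\<^sub>R A) *v x))\<^sup>2 \<le> (norm x)\<^sup>2" by linarith
  then show "norm ((mat 1 - d *\<^sub>R A) *v x) \<le> norm x" by (rule power2_le_imp_le) simp
qed

lemma sym_pos_def_sqrt_exists:
  fixes A :: "real^'n^'n"
  assumes sym: "transpose A = A" and coer: "\<forall>u. u \<bullet> (A *v u) \<ge> K * (norm u)\<^sup>2" and K: "K > 0"
  shows "\<exists>R. sym_pos_def R \<and> R ** R = A"
proof -
  define d where "d = K / (op_norm A)\<^sup>2"
  have "d > 0" using coercivity_le_op_norm[OF coer] K unfolding d_def by simp
  obtain S where sym_S: "transpose S = S" and psd_S: "pos_semidef S"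
    and SS: "S ** S = mat 1 - (mat 1 - d *\<^sub>R A)"
    using pos_semidef_sqrt_of_nonexpansive nonexpansive_shift[OF coer K] sym unfolding d_def
    by (metis transpose_diff transpose_mat transpose_scalar)
  have SSx: "S *v (S *v x) = d *\<^sub>R (A *v x)" for x
    using SS by (simp add: matrix_vector_mul_assoc scaleR_matrix_vector_assoc[symmetric])
  have pos_S: "x \<bullet> (S *v x) > 0" if "x \<noteq> 0" for x
  proof (rule ccontr)
    assume "\<not> x \<bullet> (S *v x) > 0"
    then have "x \<bullet> (S *v x) = 0" using psd_S unfolding pos_semidef_def by (meson antisym not_le)
    then have "S *v x = 0" by (rule pos_semidef_quadratic_form_zero[OF sym_S psd_S])
    then have "A *v x = 0" using SSx[of x] \<open>d > 0\<close> by simp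
    then have "K * (norm x)\<^sup>2 \<le> 0" using coer by (metis inner_zero_right)
    then show False using that K by (simp add: mult_le_0_iff)
  qed
  define R where "R = sqrt (1 / d) *\<^sub>R S"
  have scale: "sqrt (1 / d) * (sqrt (1 / d) * d) = 1"
    using \<open>d > 0\<close> by (simp add: mult.assoc[symmetric])
  have "sym_pos_def R"
    using sym_S pos_S \<open>d > 0\<close>
    by (simp add: R_def sym_pos_def_def transpose_scalar scaleR_matrix_vector_assoc[symmetric])
  moreover have "R ** R = A"
    unfolding matrix_eq R_def using \<open>d > 0\<close>
    by (simp add: matrix_vector_mul_assoc[symmetric] scaleR_matrix_vector_assoc[symmetric]
        matrix_vector_mult_scaleR SSx scale)
  ultimately show ?thesis by blast
qed

section \<open>Uniqueness of the square root\<close>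

lemma trace_sym_sandwich:
  fixes D M :: "real^'n^'n"
  assumes "transpose D = D"
  shows "trace (D ** M ** D) = (\<Sum>j\<in>UNIV. (D *v axis j 1) \<bullet> (M *v (D *v axis j 1)))"
proof -
  have D_sym: "D $ i $ j = D $ j $ i" for i j
    using assms by (metis transpose_def vec_lambda_beta)
  have "trace (D ** M ** D) = (\<Sum>j\<in>UNIV. \<Sum>k\<in>UNIV. \<Sum>l\<in>UNIV. D $ j $ l * M $ l $ k * D $ k $ j)"
    by (simp add: trace_def matrix_matrix_mult_def sum_distrib_right)
  also have "\<dots> = (\<Sum>j\<in>UNIV. \<Sum>l\<in>UNIV. \<Sum>k\<in>UNIV. D $ l $ j * M $ l $ k * D $ k $ j)"
    by (rule sum.cong[OF refl], subst sum.swap, simp add: D_sym[of _ "_ :: 'n"])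
  also have "\<dots> = (\<Sum>j\<in>UNIV. (D *v axis j 1) \<bullet> (M *v (D *v axis j 1)))"
    unfolding matrix_vector_mult_basis
    by (simp add: column_def matrix_vector_mult_def inner_vec_def sum_distrib_left mult_ac)
  finally show ?thesis .
qed

text \<open>With \<open>D = B - C\<close>, \<open>B\<^sup>2 = C\<^sup>2\<close> gives \<open>B D + D C = 0\<close>, hence
  \<open>tr (D B D) + tr (D C D) = tr (D (B D + D C)) = 0\<close> with both traces nonnegative.\<close>

lemma sym_pos_def_sqrt_unique:
  fixes B C :: "real^'n^'n"
  assumes pd_B: "sym_pos_def B" and pd_C: "sym_pos_def C" and eq: "B ** B = C ** C"
  shows "B = C"
proof -
  define D where "D = B - C"
  have sym_D: "transpose D = D" using pd_B pd_C by (simp add: D_def transpose_diff sym_pos_def_def)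
  have "B ** D + D ** C = 0"
    unfolding D_def matrix_diff_ldistrib matrix_diff_rdistrib eq by simp
  then have "trace (D ** (B ** D) + D ** (D ** C)) = trace (mat 0 :: real^'n^'n)"
    by (simp flip: matrix_add_ldistrib)
  then have "trace (D ** (B ** D)) + trace (D ** (D ** C)) = 0"
    by (simp only: trace_add trace_0)
  moreover have "trace (D ** (D ** C)) = trace (D ** C ** D)"
    using trace_mul_sym[of D "D ** C"] by simp
  ultimately have traces: "trace (D ** B ** D) + trace (D ** C ** D) = 0"
    by (simp add: matrix_mul_assoc)
  define d where "d j = D *v axis j 1" for j
  have trace_eq: "trace (D ** X ** D) = (\<Sum>j\<in>UNIV. d j \<bullet> (X *v d j))" for X
    unfolding d_def by (rule trace_sym_sandwich[OF sym_D])
  have nonneg: "0 \<le> d j \<bullet> (X *v d j)" if "sym_pos_def X" for X j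
    using sym_pos_def_imp_pos_semidef[OF that] by (simp add: pos_semidef_def)
  have "0 \<le> (\<Sum>j\<in>UNIV. d j \<bullet> (B *v d j))" "0 \<le> (\<Sum>j\<in>UNIV. d j \<bullet> (C *v d j))"
    using nonneg[OF pd_B] nonneg[OF pd_C] by (simp_all add: sum_nonneg)
  then have "(\<Sum>j\<in>UNIV. d j \<bullet> (B *v d j)) = 0"
    using traces unfolding trace_eq by linarith
  then have "d j \<bullet> (B *v d j) = 0" for j
    using nonneg[OF pd_B] sum_nonneg_eq_0_iff[of UNIV "\<lambda>j. d j \<bullet> (B *v d j)"] by auto
  then have "d j = 0" for j
    using pd_B unfolding sym_pos_def_def by (metis order.irrefl)
  then have "D $ i $ j = 0" for i j
    using matrix_entry_inner[of D i j] unfolding d_def by (metis inner_zero_right)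
  then have "D = 0" by (simp add: vec_eq_iff)
  then show ?thesis unfolding D_def by simp
qed

lemma matrix_sqrt:
  fixes A :: "real^'n^'n"
  assumes "transpose A = A" "\<forall>u. u \<bullet> (A *v u) \<ge> K * (norm u)\<^sup>2" "K > 0"
  shows "sym_pos_def (matrix_sqrt A)" "matrix_sqrt A ** matrix_sqrt A = A"
proof -
  have "\<exists>!R. sym_pos_def R \<and> R ** R = A"
    using sym_pos_def_sqrt_exists[OF assms] sym_pos_def_sqrt_unique by blast
  then have "sym_pos_def (matrix_sqrt A) \<and> matrix_sqrt A ** matrix_sqrt A = A"
    unfolding matrix_sqrt_def by (rule theI')
  then show "sym_pos_def (matrix_sqrt A)" "matrix_sqrt A ** matrix_sqrt A = A" by auto
qed

section \<open>Monotonicity estimates\<close>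

lemma powr_add_two: "0 \<le> (a::real) \<Longrightarrow> a powr (\<alpha> + 2) = a powr \<alpha> * a\<^sup>2"
  by (cases "a = 0") (simp_all add: powr_add)

lemma half_norm_diff_powr_le:
  fixes u v :: "'a::real_normed_vector"
  assumes "norm v \<le> norm u" "0 \<le> \<alpha>"
  shows "(1/2) powr \<alpha> * norm (u - v) powr \<alpha> \<le> norm u powr \<alpha>"
proof -
  have "norm (u - v) / 2 \<le> norm u" using norm_triangle_ineq4[of u v] assms(1) by linarith
  then have "(norm (u - v) / 2) powr \<alpha> \<le> norm u powr \<alpha>" using assms(2) by (intro powr_mono2) auto
  then show ?thesis by (simp add: powr_mult powr_divide)
qed

lemma powr_diff_mult_le:
  fixes a b \<alpha> :: real
  assumes "0 < \<alpha>" "\<alpha> \<le> 1" "0 \<le> b" "b \<le> a"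
  shows "(a powr \<alpha> - b powr \<alpha>) * b \<le> \<alpha> * a powr \<alpha> * (a - b)"
proof (cases "b = 0")
  case False
  then have "b > 0" using assms by simp
  define t where "t = a / b"
  have "t > 0" "a = b * t" using \<open>b > 0\<close> assms unfolding t_def by simp_all
  have "t powr \<alpha> * 1 powr (1 - \<alpha>) \<le> \<alpha> * t + (1 - \<alpha>) * 1"
    by (rule Youngs_inequality_0) (use assms \<open>t > 0\<close> in auto)
  then have "b powr \<alpha> * t powr \<alpha> \<le> b powr \<alpha> * (\<alpha> * t + (1 - \<alpha>))"
    by (intro mult_left_mono) auto
  then have "a powr \<alpha> - b powr \<alpha> \<le> \<alpha> * b powr \<alpha> * (t - 1)"
    using \<open>a = b * t\<close> \<open>b > 0\<close> \<open>t > 0\<close> by (simp add: powr_mult algebra_simps)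
  then have "(a powr \<alpha> - b powr \<alpha>) * b \<le> \<alpha> * b powr \<alpha> * (t - 1) * b"
    using \<open>b > 0\<close> by (intro mult_right_mono) auto
  also have "\<dots> = \<alpha> * b powr \<alpha> * (a - b)" using \<open>a = b * t\<close> by (simp add: algebra_simps)
  also have "\<dots> \<le> \<alpha> * a powr \<alpha> * (a - b)"
    using assms by (intro mult_right_mono mult_left_mono powr_mono2) auto
  finally show ?thesis .
qed (use assms in simp)

lemma inner_diff_lower_bound_wlog:
  fixes F :: "'a::real_inner \<Rightarrow> 'a"
  assumes "\<And>u v. norm v \<le> norm u \<Longrightarrow> g (norm (u - v)) \<le> (F u - F v) \<bullet> (u - v)"
  shows "g (norm (u - v)) \<le> (F u - F v) \<bullet> (u - v)"
proof (cases "norm v \<le> norm u")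
  case False
  then have "g (norm (v - u)) \<le> (F v - F u) \<bullet> (v - u)" using assms by simp
  then show ?thesis by (simp add: norm_minus_commute algebra_simps)
qed (use assms in simp)

lemma inner_scaleR_diff:
  fixes x y :: "'a::real_inner"
  shows "(p *\<^sub>R x - q *\<^sub>R y) \<bullet> (x - y)
    = (p + q) / 2 * (norm (x - y))\<^sup>2 + (p - q) / 2 * ((norm x)\<^sup>2 - (norm y)\<^sup>2)"
  by (simp add: power2_norm_eq_inner inner_diff_left inner_diff_right inner_commute field_simps)

lemma inner_norm_powr_scaleR_ge:
  fixes x y :: "'a::real_inner"
  assumes "\<alpha> > 0"
  shows "(1/2) * (1/2) powr \<alpha> * norm (x - y) powr (\<alpha> + 2)
    \<le> (norm x powr \<alpha> *\<^sub>R x - norm y powr \<alpha> *\<^sub>R y) \<bullet> (x - y)"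
proof (rule inner_diff_lower_bound_wlog[where F = "\<lambda>x. norm x powr \<alpha> *\<^sub>R x"])
  fix x y :: 'a
  assume le: "norm y \<le> norm x"
  let ?p = "norm x powr \<alpha>" and ?q = "norm y powr \<alpha>"
  have "?q \<le> ?p" using le assms by (intro powr_mono2) auto
  moreover have "(norm y)\<^sup>2 \<le> (norm x)\<^sup>2" using le by (simp add: power_mono)
  ultimately have "0 \<le> (?p - ?q) * ((norm x)\<^sup>2 - (norm y)\<^sup>2)" by simp
  moreover have "(?p + ?q) / 2 * (norm (x - y))\<^sup>2 + (?p - ?q) / 2 * ((norm x)\<^sup>2 - (norm y)\<^sup>2)
      = ?p / 2 * (norm (x - y))\<^sup>2
        + (?q * (norm (x - y))\<^sup>2 + (?p - ?q) * ((norm x)\<^sup>2 - (norm y)\<^sup>2)) / 2"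
    by (simp add: field_simps)
  ultimately have "?p / 2 * (norm (x - y))\<^sup>2 \<le> (?p *\<^sub>R x - ?q *\<^sub>R y) \<bullet> (x - y)"
    unfolding inner_scaleR_diff by simp
  moreover have "(1/2) powr \<alpha> * norm (x - y) powr \<alpha> * (norm (x - y))\<^sup>2 \<le> ?p * (norm (x - y))\<^sup>2"
    using half_norm_diff_powr_le[OF le, of \<alpha>] assms by (intro mult_right_mono) auto
  moreover have "(1/2) * (1/2) powr \<alpha> * norm (x - y) powr (\<alpha> + 2)
      = (1/2) * ((1/2) powr \<alpha> * norm (x - y) powr \<alpha> * (norm (x - y))\<^sup>2)"
    by (simp add: powr_add_two)
  ultimately show "(1/2) * (1/2) powr \<alpha> * norm (x - y) powr (\<alpha> + 2)
    \<le> (norm x powr \<alpha> *\<^sub>R x - norm y powr \<alpha> *\<^sub>R y) \<bullet> (x - y)" by linarith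
qed

lemma beta_monotone_sym_conj:
  fixes S :: "real^'n^'n"
  assumes sym: "transpose S = S" and "k > 0" and lower: "\<And>h. k * norm h \<le> norm (S *v h)"
    and "0 \<le> \<beta>" and "beta_monotone \<beta> G"
  shows "beta_monotone \<beta> (\<lambda>u. S *v G (S *v u))"
proof -
  obtain C where "C > 0" and G: "\<And>x y. C * norm (x - y) powr \<beta> \<le> (G x - G y) \<bullet> (x - y)"
    using \<open>beta_monotone \<beta> G\<close> unfolding beta_monotone_def by blast
  show ?thesis unfolding beta_monotone_def
  proof (intro exI[of _ "C * k powr \<beta>"] conjI allI)
    show "C * k powr \<beta> > 0" using \<open>C > 0\<close> \<open>k > 0\<close> by simp
    fix u v :: "real^'n"
    have "C * k powr \<beta> * norm (u - v) powr \<beta> = C * (k * norm (u - v)) powr \<beta>"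
      using \<open>k > 0\<close> by (simp add: powr_mult)
    also have "\<dots> \<le> C * norm (S *v u - S *v v) powr \<beta>"
      using lower[of "u - v"] \<open>k > 0\<close> \<open>C > 0\<close> \<open>0 \<le> \<beta>\<close>
      by (intro mult_left_mono powr_mono2) (auto simp: matrix_vector_mult_diff_distrib)
    also have "\<dots> \<le> (G (S *v u) - G (S *v v)) \<bullet> (S *v u - S *v v)" by (rule G)
    also have "\<dots> = (S *v G (S *v u) - S *v G (S *v v)) \<bullet> (u - v)"
      by (simp add: inner_matrix_vector_sym[OF sym] matrix_vector_mult_diff_distrib[symmetric])
    finally show "C * k powr \<beta> * norm (u - v) powr \<beta> \<le> (S *v G (S *v u) - S *v G (S *v v)) \<bullet> (u - v)" .
  qed
qed

lemma inner_norm_powr_matrix_ge_of_norm_le: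
  fixes A :: "real^'n^'n" and u v :: "real^'n"
  assumes coer: "\<forall>u. u \<bullet> (A *v u) \<ge> K * (norm u)\<^sup>2"
    and "0 < \<alpha>" "\<alpha> \<le> 1" and le: "norm v \<le> norm u"
  shows "(K - \<alpha> * op_norm A) * norm u powr \<alpha> * (norm (u - v))\<^sup>2
    \<le> (norm u powr \<alpha> *\<^sub>R (A *v u) - norm v powr \<alpha> *\<^sub>R (A *v v)) \<bullet> (u - v)"
proof -
  define a b h M where "a = norm u" and "b = norm v" and "h = u - v" and "M = op_norm A"
  have "b \<le> a" "b powr \<alpha> \<le> a powr \<alpha>" "0 \<le> M"
    using le \<open>0 < \<alpha>\<close> op_norm_nonneg unfolding a_def b_def M_def by (auto intro: powr_mono2)
  have split: "(a powr \<alpha> *\<^sub>R (A *v u) - b powr \<alpha> *\<^sub>R (A *v v)) \<bullet> h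
      = a powr \<alpha> * (h \<bullet> (A *v h)) + (a powr \<alpha> - b powr \<alpha>) * ((A *v v) \<bullet> h)"
    unfolding h_def by (simp add: inner_commute algebra_simps)
  have "a powr \<alpha> * (K * (norm h)\<^sup>2) \<le> a powr \<alpha> * (h \<bullet> (A *v h))"
    using coer by (intro mult_left_mono) auto
  moreover have "- ((A *v v) \<bullet> h) \<le> M * b * norm h"
  proof -
    have "\<bar>(A *v v) \<bullet> h\<bar> \<le> norm (A *v v) * norm h" by (rule Cauchy_Schwarz_ineq2)
    also have "\<dots> \<le> M * b * norm h"
      unfolding M_def b_def by (intro mult_right_mono norm_matrix_vector_le_op_norm) auto
    finally show ?thesis by linarith
  qed
  then have "(a powr \<alpha> - b powr \<alpha>) * (- ((A *v v) \<bullet> h)) \<le> (a powr \<alpha> - b powr \<alpha>) * (M * b * norm h)"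
    using \<open>b powr \<alpha> \<le> a powr \<alpha>\<close> by (intro mult_left_mono) auto
  then have "- ((a powr \<alpha> - b powr \<alpha>) * ((A *v v) \<bullet> h)) \<le> (a powr \<alpha> - b powr \<alpha>) * b * (M * norm h)"
    by (simp add: mult_ac)
  moreover have "(a powr \<alpha> - b powr \<alpha>) * b * (M * norm h) \<le> \<alpha> * a powr \<alpha> * norm h * (M * norm h)"
  proof (intro mult_right_mono)
    have "(a powr \<alpha> - b powr \<alpha>) * b \<le> \<alpha> * a powr \<alpha> * (a - b)"
      using assms \<open>b \<le> a\<close> unfolding b_def by (intro powr_diff_mult_le) auto
    also have "\<dots> \<le> \<alpha> * a powr \<alpha> * norm h"
      using norm_triangle_ineq2[of u v] \<open>0 < \<alpha>\<close> unfolding a_def b_def h_def by (intro mult_left_mono) auto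
    finally show "(a powr \<alpha> - b powr \<alpha>) * b \<le> \<alpha> * a powr \<alpha> * norm h" .
  qed (use \<open>0 \<le> M\<close> in simp)
  ultimately show ?thesis
    unfolding a_def[symmetric] b_def[symmetric] h_def[symmetric] M_def[symmetric] split
    by (simp add: algebra_simps power2_eq_square)
qed

lemma inner_norm_powr_matrix_ge:
  fixes A :: "real^'n^'n"
  assumes coer: "\<forall>u. u \<bullet> (A *v u) \<ge> K * (norm u)\<^sup>2" and "K > 0"
    and "0 < \<alpha>" and small: "\<alpha> * op_norm A \<le> K"
  shows "(K - \<alpha> * op_norm A) * (1/2) powr \<alpha> * norm (u - v) powr (\<alpha> + 2)
    \<le> (norm u powr \<alpha> *\<^sub>R (A *v u) - norm v powr \<alpha> *\<^sub>R (A *v v)) \<bullet> (u - v)"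
proof (rule inner_diff_lower_bound_wlog[where F = "\<lambda>u. norm u powr \<alpha> *\<^sub>R (A *v u)"])
  fix u v :: "real^'n"
  assume le: "norm v \<le> norm u"
  have "K \<le> op_norm A" by (rule coercivity_le_op_norm[OF coer])
  then have "\<alpha> \<le> 1" using small \<open>K > 0\<close> by (metis dual_order.trans mult_le_cancel_right2 not_le)
  have "(K - \<alpha> * op_norm A) * (1/2) powr \<alpha> * norm (u - v) powr (\<alpha> + 2)
      = (K - \<alpha> * op_norm A) * ((1/2) powr \<alpha> * norm (u - v) powr \<alpha>) * (norm (u - v))\<^sup>2"
    by (simp add: powr_add_two)
  also have "\<dots> \<le> (K - \<alpha> * op_norm A) * norm u powr \<alpha> * (norm (u - v))\<^sup>2"
    using half_norm_diff_powr_le[OF le, of \<alpha>] small \<open>0 < \<alpha>\<close> by (intro mult_right_mono mult_left_mono) auto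
  also have "\<dots> \<le> (norm u powr \<alpha> *\<^sub>R (A *v u) - norm v powr \<alpha> *\<^sub>R (A *v v)) \<bullet> (u - v)"
    by (rule inner_norm_powr_matrix_ge_of_norm_le[OF coer \<open>0 < \<alpha>\<close> \<open>\<alpha> \<le> 1\<close> le])
  finally show "(K - \<alpha> * op_norm A) * (1/2) powr \<alpha> * norm (u - v) powr (\<alpha> + 2)
    \<le> (norm u powr \<alpha> *\<^sub>R (A *v u) - norm v powr \<alpha> *\<^sub>R (A *v v)) \<bullet> (u - v)" .
qed

lemma beta_monotone_2_matrix:
  fixes A :: "real^'n^'n"
  assumes "\<forall>u. u \<bullet> (A *v u) \<ge> K * (norm u)\<^sup>2" and "K > 0"
  shows "beta_monotone 2 (\<lambda>u. A *v u)"
  unfolding beta_monotone_def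
proof (intro exI[of _ K] conjI allI)
  fix u v :: "real^'n"
  have "K * (norm (u - v))\<^sup>2 \<le> (u - v) \<bullet> (A *v (u - v))" using assms by simp
  then show "K * norm (u - v) powr 2 \<le> (A *v u - A *v v) \<bullet> (u - v)"
    by (simp add: matrix_vector_mult_diff_distrib inner_commute)
qed (rule \<open>K > 0\<close>)

lemma beta_monotone_norm_sqrt_powr_matrix:
  fixes A :: "real^'n^'n"
  assumes sym: "transpose A = A" and coer: "\<forall>u. u \<bullet> (A *v u) \<ge> K * (norm u)\<^sup>2"
    and "K > 0" "\<alpha> > 0"
  shows "beta_monotone (\<alpha> + 2) (\<lambda>u. norm (matrix_sqrt A *v u) powr \<alpha> *\<^sub>R (A *v u))"
proof -
  define S where "S = matrix_sqrt A"
  have sym_S: "transpose S = S" and SS: "S ** S = A"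
    using matrix_sqrt[OF sym coer \<open>K > 0\<close>] unfolding S_def sym_pos_def_def by auto
  have "sqrt K * norm h \<le> norm (S *v h)" for h
  proof (rule power2_le_imp_le)
    have "(norm (S *v h))\<^sup>2 = h \<bullet> (A *v h)"
      by (simp add: power2_norm_eq_inner inner_matrix_vector_sym[OF sym_S] matrix_vector_mul_assoc SS)
    then show "(sqrt K * norm h)\<^sup>2 \<le> (norm (S *v h))\<^sup>2"
      using coer \<open>K > 0\<close> by (simp add: power_mult_distrib)
  qed simp
  moreover have "beta_monotone (\<alpha> + 2) (\<lambda>x :: real^'n. norm x powr \<alpha> *\<^sub>R x)"
    unfolding beta_monotone_def using inner_norm_powr_scaleR_ge[OF \<open>\<alpha> > 0\<close>]
    by (intro exI[of _ "(1/2) * (1/2) powr \<alpha>"]) auto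
  ultimately have "beta_monotone (\<alpha> + 2) (\<lambda>u. S *v (norm (S *v u) powr \<alpha> *\<^sub>R (S *v u)))"
    using sym_S \<open>K > 0\<close> \<open>\<alpha> > 0\<close> by (intro beta_monotone_sym_conj[of S "sqrt K"]) auto
  moreover have "S *v (norm (S *v u) powr \<alpha> *\<^sub>R (S *v u)) = norm (S *v u) powr \<alpha> *\<^sub>R (A *v u)" for u
    by (simp add: matrix_vector_mult_scaleR matrix_vector_mul_assoc SS)
  ultimately show ?thesis unfolding S_def by simp
qed

lemma monotone_map_norm_powr_matrix:
  fixes A :: "real^'n^'n"
  assumes "\<forall>u. u \<bullet> (A *v u) \<ge> K * (norm u)\<^sup>2" "K > 0" "0 < \<alpha>" "\<alpha> * op_norm A \<le> K"
  shows "monotone_map (\<lambda>u. norm u powr \<alpha> *\<^sub>R (A *v u))"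
  unfolding monotone_map_def
proof (intro allI)
  fix u v :: "real^'n"
  have "0 \<le> (K - \<alpha> * op_norm A) * (1/2) powr \<alpha> * norm (u - v) powr (\<alpha> + 2)"
    using assms(4) by simp
  then show "0 \<le> (norm u powr \<alpha> *\<^sub>R (A *v u) - norm v powr \<alpha> *\<^sub>R (A *v v)) \<bullet> (u - v)"
    using inner_norm_powr_matrix_ge[OF assms] by (rule order_trans)
qed

lemma beta_monotone_norm_powr_matrix:
  fixes A :: "real^'n^'n"
  assumes "\<forall>u. u \<bullet> (A *v u) \<ge> K * (norm u)\<^sup>2" "K > 0" "0 < \<alpha>" "\<alpha> * op_norm A < K"
  shows "beta_monotone (\<alpha> + 2) (\<lambda>u. norm u powr \<alpha> *\<^sub>R (A *v u))"
  unfolding beta_monotone_def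
  using inner_norm_powr_matrix_ge[OF assms(1-3)] assms(4)
  by (intro exI[of _ "(K - \<alpha> * op_norm A) * (1/2) powr \<alpha>"]) auto

theorem mainTheorem10:
  fixes A :: "real^'n^'n" and \<kappa>0 :: real
  assumes k0: "\<kappa>0 > 0"
    and coer: "\<forall>u. u \<bullet> (A *v u) \<ge> \<kappa>0\<^sup>2 * (norm u)\<^sup>2"
  shows "beta_monotone 2 (\<lambda>u. A *v u)
    \<and> (\<forall>\<alpha>>0. transpose A = A \<longrightarrow>
          beta_monotone (\<alpha> + 2) (\<lambda>u. norm (matrix_sqrt A *v u) powr \<alpha> *\<^sub>R (A *v u)))
    \<and> (\<forall>\<alpha>>0. \<alpha> = \<kappa>0\<^sup>2 / op_norm A \<longrightarrow>
          monotone_map (\<lambda>u. norm u powr \<alpha> *\<^sub>R (A *v u)))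
    \<and> (\<forall>\<alpha>>0. \<alpha> < \<kappa>0\<^sup>2 / op_norm A \<longrightarrow>
          beta_monotone (\<alpha> + 2) (\<lambda>u. norm u powr \<alpha> *\<^sub>R (A *v u)))"
proof -
  have K: "\<kappa>0\<^sup>2 > 0" using k0 by simp
  have "0 < op_norm A" using coercivity_le_op_norm[OF coer] K by linarith
  then have ratio: "\<alpha> * op_norm A \<le> \<kappa>0\<^sup>2 \<longleftrightarrow> \<alpha> \<le> \<kappa>0\<^sup>2 / op_norm A"
    "\<alpha> * op_norm A < \<kappa>0\<^sup>2 \<longleftrightarrow> \<alpha> < \<kappa>0\<^sup>2 / op_norm A" for \<alpha>
    by (simp_all add: field_simps)
  show ?thesis
    using beta_monotone_2_matrix[OF coer K]
      beta_monotone_norm_sqrt_powr_matrix[OF _ coer K]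
      monotone_map_norm_powr_matrix[OF coer K] beta_monotone_norm_powr_matrix[OF coer K]
    by (simp add: ratio)
qed

end
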